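(* Under the setting described in the context, let $\{(x^j,y^j,z^j)\}_{j\ge0}$ be generated by the algorithm described there, and assume that $\sum_{j=1}^\infty\|z^{j+1}-z^j\|_2^2<\infty$ and that $\{z^j\}$ is bounded. Then $\{(x^j,y^j)\}$ is bounded, and every limit point $(\bar x,\bar y)$ of $\{(x^j,y^j)\}$ is a stationary point of the problem, i.e., there exists $\hat z\in\mathbb{R}^L$ with $$0\in\nabla f(\bar x)+\partial\mathcal{I}_{\mathcal{X}}(\bar x)-R^\top\hat z,\qquad 0\in\partial g(\bar y)+\partial\mathcal{I}_{\mathcal{Y}}(\bar y)+\hat z,\qquad \bar y=R\bar x .$$
   Context: Let $K,L\ge1$, $P_1,\dots,P_K\ge1$, $P=\sum_kP_k$. Let $R=(R_1,\dots,R_K)\in\{0,1\}^{L\times P}$ with $R_k\in\{0,1\}^{L\times P_k}$, every column of $R$ having at least one nonzero entry. Let $c\in\mathbb{R}^L$ with $c_l>0$, integers $1\le w_k\le P_k$, and constants $\alpha,\beta>0$, $s_k>0$. Vectors $x\in\mathbb{R}^P$ are partitioned as $x=(x_1;\dots;x_K)$ with $x_k\in\mathbb{R}^{P_k}$. Let $U_k(u)=\beta\log u-s_k/u$ for $u>0$. For $x\ge0$ define $f(x)=-\sum_{k}U_k(\|x_k\|_1)$ if $\|x_k\|_1>0$ for all $k$, and $f(x)=+\infty$ otherwise; let $g(y)=\alpha\max_l y_l/c_l$. Let $\mathcal{X}=\{x\in\mathbb{R}^P: x\ge0,\ \|x_k\|_0\le w_k\ \forall k\}$ and $\mathcal{Y}=\{y\in\mathbb{R}^L:0\le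 y\le c\}$, and let $\mathcal{I}_S$ denote the indicator function of a set $S$ ($0$ on $S$, $+\infty$ off $S$). The problem is $\min_{x,y} f(x)+g(y)+\mathcal{I}_{\mathcal{X}}(x)+\mathcal{I}_{\mathcal{Y}}(y)$ s.t. $y=Rx$, with augmented Lagrangian $$L_\rho(x,y;z)=f(x)+g(y)+\mathcal{I}_{\mathcal{X}}(x)+\mathcal{I}_{\mathcal{Y}}(y)+z^\top(y-Rx)+\frac{\rho}{2}\|y-Rx\|_2^2 .$$ Algorithm: fix $\rho>0$ and $\mu>\rho\|R\|_2^2$ ($\|R\|_2$ the spectral norm), and an initial point $(x^0,y^0,z^0)$ with $x^0\in\mathcal{X}$, $\|x^0_k\|_1>0$ for all $k$, $y^0\in\mathcal{Y}$. For $j\ge0$: $q^j=R^\top(y^j-Rx^j+z^j/\rho)$, $\nu^j=x^j+(\rho/\mu)q^j$; $x^{j+1}\in\arg\min_{x\in\mathcal{X}} f(x)+\frac{\mu}{2}\|x-\nu^j\|_2^2$; $y^{j+1}\in\arg\min_{y\in\mathcal{Y}} g(y)+\frac{\rho}{2}\|y-Rx^{j+1}+z^j/\rho\|_2^2$; $z^{j+1}=z^j+\rho(y^{j+1}-Rx^{j+1})$. Here $\partial$ denotes the limiting (Mordukhovich) subdifferential, and $\nabla f$ the gradient of $f$ at points where all blocks $x_k$ have $\|x_k\|_1>0$. *)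

theory Defs
  imports "HOL-Analysis.Analysis" "HOL-Library.Extended_Real"
begin

text \<open>Vectors in R^P are real^'p; the block partition x = (x_1;...;x_K) is encoded by
  a map blk :: 'p => 'k assigning each coordinate to its block.  R^L is real^'l.\<close>

definition blocknorm :: "('p::finite \<Rightarrow> 'k) \<Rightarrow> real^'p \<Rightarrow> 'k \<Rightarrow> real" where
  "blocknorm blk x k = (\<Sum>i\<in>{i. blk i = k}. \<bar>x$i\<bar>)"

definition blockl0 :: "('p::finite \<Rightarrow> 'k) \<Rightarrow> real^'p \<Rightarrow> 'k \<Rightarrow> nat" where
  "blockl0 blk x k = card {i. blk i = k \<and> x$i \<noteq> 0}"

definition Uk :: "real \<Rightarrow> real \<Rightarrow> real \<Rightarrow> real" where
  "Uk beta s u = beta * ln u - s / u"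

definition fobj :: "('p::finite \<Rightarrow> 'k::finite) \<Rightarrow> real \<Rightarrow> ('k \<Rightarrow> real) \<Rightarrow> real^'p \<Rightarrow> ereal" where
  "fobj blk beta s x =
     (if (\<forall>i. 0 \<le> x$i) \<and> (\<forall>k. 0 < blocknorm blk x k)
      then ereal (- (\<Sum>k\<in>UNIV. Uk beta (s k) (blocknorm blk x k)))
      else \<infinity>)"

text \<open>Gradient of f at a point where all blocks have positive l1-norm (x >= 0):
  d/dx_i [ - U_k(sum_{i' in block k} x_i') ] = -(beta/u + s_k/u^2), u = ||x_k||_1.\<close>
definition fgrad :: "('p::finite \<Rightarrow> 'k::finite) \<Rightarrow> real \<Rightarrow> ('k \<Rightarrow> real) \<Rightarrow> real^'p \<Rightarrow> real^'p" where
  "fgrad blk beta s x = (\<chi> i. - (beta / blocknorm blk x (blk i)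
                                  + s (blk i) / (blocknorm blk x (blk i))^2))"

definition gobj :: "real \<Rightarrow> real^'l::finite \<Rightarrow> real^'l \<Rightarrow> real" where
  "gobj alpha c y = alpha * Max (range (\<lambda>l. y$l / c$l))"

definition Xset :: "('p::finite \<Rightarrow> 'k) \<Rightarrow> ('k \<Rightarrow> nat) \<Rightarrow> (real^'p) set" where
  "Xset blk w = {x. (\<forall>i. 0 \<le> x$i) \<and> (\<forall>k. blockl0 blk x k \<le> w k)}"

definition Yset :: "real^'l::finite \<Rightarrow> (real^'l) set" where
  "Yset c = {y. \<forall>l. 0 \<le> y$l \<and> y$l \<le> c$l}"

definition indic :: "'a set \<Rightarrow> 'a \<Rightarrow> ereal" where
  "indic S x = (if x \<in> S then 0 else \<infinity>)"

definition frechet_subdiff :: "('a::real_inner \<Rightarrow> ereal) \<Rightarrow> 'a \<Rightarrow> 'a set" where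
  "frechet_subdiff phi x = {v. phi x \<noteq> \<infinity> \<and> phi x \<noteq> -\<infinity> \<and>
     (\<forall>e>0. \<exists>d>0. \<forall>u. norm (u - x) < d \<longrightarrow>
        phi u \<ge> phi x + ereal (inner v (u - x) - e * norm (u - x)))}"

definition limiting_subdiff :: "('a::real_inner \<Rightarrow> ereal) \<Rightarrow> 'a \<Rightarrow> 'a set" where
  "limiting_subdiff phi x = {v. phi x \<noteq> \<infinity> \<and> phi x \<noteq> -\<infinity> \<and>
     (\<exists>xs vs. xs \<longlonglongrightarrow> x \<and> (\<lambda>n. phi (xs n)) \<longlonglongrightarrow> phi x \<and>
        (\<forall>n. vs n \<in> frechet_subdiff phi (xs n)) \<and> vs \<longlonglongrightarrow> v)}"

definition is_argmin_on :: "('a \<Rightarrow> 'b::linorder) \<Rightarrow> 'a set \<Rightarrow> 'a \<Rightarrow> bool" where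
  "is_argmin_on h S x \<longleftrightarrow> x \<in> S \<and> (\<forall>x'\<in>S. h x \<le> h x')"

end

theory Submission
  imports Defs
begin

text \<open>
  One sweep of the proximal-linearized ADMM lowers the augmented Lagrangian
  L(x^j, y^j; z^j) by (mu - rho ||R||^2)/2 ||x^(j+1) - x^j||^2, up to the dual increment
  ||z^(j+1) - z^j||^2 / rho. Bounded z with square-summable increments forces the residual
  y^j - R x^j = (z^j - z^(j-1))/rho to vanish; as y lives in a box and R is a 0/1 matrix
  without zero columns acting on x >= 0, the iterates are bounded. Then L is bounded, the primal
  increments are square summable, and the barrier s_k / ||x_k||_1 hidden in f keeps all block
  norms away from 0. Along a subsequence on which z converges as well, the optimality of both
  subproblems passes to the limit. The limiting x-problem is differentiable along the feasible
  segments of the sparsity set, which gives the normal-cone inclusion for x; the limiting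
  y-problem is convex and reduces to minimizing alpha max_l v_l/c_l + <zh, v> over the box,
  whose multipliers are written down explicitly.
\<close>

lemma power2_norm_add:
  "(norm (a + b))\<^sup>2 = (norm a)\<^sup>2 + 2 * inner a b + (norm (b::'a::real_inner))\<^sup>2"
  by (simp add: power2_norm_eq_inner inner_add_left inner_add_right inner_commute)

lemma power2_norm_diff:
  "(norm (a - b))\<^sup>2 = (norm a)\<^sup>2 - 2 * inner a b + (norm (b::'a::real_inner))\<^sup>2"
  by (simp add: power2_norm_eq_inner inner_diff_left inner_diff_right inner_commute)

lemma inner_transpose_mult:
  "inner (transpose (A::real^'n::finite^'m::finite) *v a) h = inner a (A *v h)"
  by (simp add: dot_lmul_matrix)

lemma tendsto_matrix_mult: "f \<longlonglongrightarrow> v \<Longrightarrow> (\<lambda>n. (A::real^'a::finite^'b::finite) *v f n) \<longlonglongrightarrow> A *v v"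
  by (rule bounded_linear.tendsto[OF matrix_vector_mul_bounded_linear])

lemma tendsto_zero_if_power2_norm:
  fixes f :: "nat \<Rightarrow> 'a::real_normed_vector"
  assumes "(\<lambda>n. (norm (f n))\<^sup>2) \<longlonglongrightarrow> 0"
  shows "f \<longlonglongrightarrow> 0"
proof -
  have "(\<lambda>n. sqrt ((norm (f n))\<^sup>2)) \<longlonglongrightarrow> sqrt 0" by (rule tendsto_real_sqrt[OF assms])
  thus ?thesis by (simp add: tendsto_norm_zero_iff)
qed

lemma DERIV_nonneg_at_right_min:
  fixes f :: "real \<Rightarrow> real"
  assumes "(f has_real_derivative D) (at a)" and "e > 0"
    and "\<And>t. 0 < t \<Longrightarrow> t \<le> e \<Longrightarrow> f a \<le> f (a + t)"
  shows "0 \<le> D"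
proof (rule ccontr)
  assume "\<not> 0 \<le> D"
  then obtain d where d: "d > 0" "\<And>t. 0 < t \<Longrightarrow> t < d \<Longrightarrow> f (a + t) < f a"
    using DERIV_neg_dec_right[OF assms(1)] by force
  define t where "t = min e (d / 2)"
  have "0 < t" "t < d" "t \<le> e" using d assms(2) by (auto simp: t_def)
  thus False using d(2) assms(3) by fastforce
qed

lemma strict_mono_pred_shift:
  assumes "strict_mono r"
  obtains p where "strict_mono p" "\<And>n. Suc (p n) = r (Suc n)"
proof
  show pS: "Suc (r (Suc n) - 1) = r (Suc n)" for n
    using seq_suble[OF assms, of "Suc n"] by linarith
  have "r (Suc n) < r (Suc (Suc n))" for n using assms by (simp add: strict_mono_def)
  then show "strict_mono (\<lambda>n. r (Suc n) - 1)"
    unfolding strict_mono_Suc_iff using pS by (metis Suc_less_eq)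
qed

lemma frechet_subdiff_imp_limiting_subdiff:
  assumes "v \<in> frechet_subdiff phi x"
  shows "v \<in> limiting_subdiff phi x"
  unfolding limiting_subdiff_def mem_Collect_eq
proof (intro conjI)
  show "phi x \<noteq> \<infinity>" "phi x \<noteq> -\<infinity>" using assms by (auto simp: frechet_subdiff_def)
  show "\<exists>xs vs. xs \<longlonglongrightarrow> x \<and> (\<lambda>n. phi (xs n)) \<longlonglongrightarrow> phi x \<and>
      (\<forall>n. vs n \<in> frechet_subdiff phi (xs n)) \<and> vs \<longlonglongrightarrow> v"
    by (rule exI[of _ "\<lambda>n. x"], rule exI[of _ "\<lambda>n. v"]) (use assms in simp)
qed

lemma frechet_subdiff_indicI:
  assumes "x \<in> S" "d > 0" "\<And>u. u \<in> S \<Longrightarrow> norm (u - x) < d \<Longrightarrow> inner v (u - x) \<le> 0"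
  shows "v \<in> frechet_subdiff (indic S) x"
  unfolding frechet_subdiff_def
proof (intro CollectI conjI allI impI)
  show "indic S x \<noteq> \<infinity>" "indic S x \<noteq> -\<infinity>" using assms(1) by (auto simp: indic_def)
  fix e :: real assume e: "e > 0"
  have "indic S x + ereal (inner v (u - x) - e * norm (u - x)) \<le> indic S u"
    if "norm (u - x) < d" for u
  proof (cases "u \<in> S")
    case True
    with assms(3) that have "inner v (u - x) \<le> 0" by blast
    moreover have "0 \<le> e * norm (u - x)" using e by simp
    ultimately show ?thesis using True assms(1) by (simp add: indic_def)
  qed (simp add: indic_def)
  with assms(2) show "\<exists>d>0. \<forall>u. norm (u - x) < d \<longrightarrow>
      indic S x + ereal (inner v (u - x) - e * norm (u - x)) \<le> indic S u" by blast
qed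

lemma subgradient_imp_frechet_subdiff:
  assumes "\<And>u. phi x + inner a (u - x) \<le> phi u"
  shows "a \<in> frechet_subdiff (\<lambda>v. ereal (phi v)) x"
  unfolding frechet_subdiff_def
proof (intro CollectI conjI allI impI)
  fix e :: real assume e: "e > 0"
  have "ereal (phi x) + ereal (inner a (u - x) - e * norm (u - x)) \<le> ereal (phi u)" for u
  proof -
    have "0 \<le> e * norm (u - x)" using e by simp
    thus ?thesis using assms[of u] by simp
  qed
  thus "\<exists>d>0. \<forall>u. norm (u - x) < d \<longrightarrow>
      ereal (phi x) + ereal (inner a (u - x) - e * norm (u - x)) \<le> ereal (phi u)"
    using zero_less_one by blast
qed simp_all

lemma prox_min_imp_linear_min:
  fixes phi :: "'a::real_inner \<Rightarrow> real"
  assumes "rho > 0" "convex S" "convex_on S phi" "yb \<in> S"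
    and opt: "\<And>v. v \<in> S \<Longrightarrow> phi yb + rho/2 * (norm ((1/rho) *\<^sub>R zh))\<^sup>2
                 \<le> phi v + rho/2 * (norm (v - yb + (1/rho) *\<^sub>R zh))\<^sup>2"
    and "v \<in> S"
  shows "phi yb + inner zh yb \<le> phi v + inner zh v"
proof -
  define D where "D = (norm (v - yb))\<^sup>2"
  define G where "G = phi v + inner zh (v - yb) - phi yb"
  have D0: "0 \<le> D" unfolding D_def by simp
  have G_bound: "0 \<le> G + rho * t * D / 2" if t: "0 < t" "t \<le> 1" for t
  proof -
    define vt where "vt = (1 - t) *\<^sub>R yb + t *\<^sub>R v"
    have "vt \<in> S" unfolding vt_def using assms(2,4,6) t by (simp add: convexD)
    have "phi vt \<le> (1 - t) * phi yb + t * phi v"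
      unfolding vt_def using convex_onD[OF assms(3)] assms(4,6) t by simp
    moreover have "rho/2 * (norm (vt - yb + (1/rho) *\<^sub>R zh))\<^sup>2
        = rho/2 * (t\<^sup>2 * D) + t * inner (v - yb) zh + rho/2 * (norm ((1/rho) *\<^sub>R zh))\<^sup>2"
    proof -
      have eq: "vt - yb + (1/rho) *\<^sub>R zh = t *\<^sub>R (v - yb) + (1/rho) *\<^sub>R zh"
        by (simp add: vt_def algebra_simps)
      show ?thesis
        unfolding eq power2_norm_add inner_scaleR_left inner_scaleR_right norm_scaleR
          power_mult_distrib D_def
        using assms(1) by (simp add: field_simps power2_eq_square)
    qed
    ultimately have "0 \<le> t * (G + rho * t * D / 2)"
      using opt[OF \<open>vt \<in> S\<close>] unfolding G_def
      by (simp add: algebra_simps inner_commute power2_eq_square)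
    thus ?thesis using t by (simp add: zero_le_mult_iff)
  qed
  have "0 \<le> G"
  proof (rule ccontr)
    assume "\<not> 0 \<le> G"
    define t where "t = min 1 (- G / (rho * D + 1))"
    have dp: "rho * D + 1 > 0" using assms(1) D0 by (simp add: add_nonneg_pos)
    have t: "0 < t" "t \<le> 1" unfolding t_def using \<open>\<not> 0 \<le> G\<close> dp by (auto simp: divide_neg_pos)
    have "t \<le> - G / (rho * D + 1)" by (simp add: t_def)
    hence "t * (rho * D + 1) \<le> - G" using dp by (simp add: field_simps)
    moreover have "0 \<le> rho * t * D" using assms(1) t D0 by simp
    ultimately have "rho * t * D / 2 < - G" using t by (simp add: algebra_simps)
    thus False using G_bound[OF t] by simp
  qed
  thus ?thesis unfolding G_def by (simp add: inner_diff_right)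
qed

section \<open>The objective g as a maximal ratio\<close>

definition max_ratio :: "real^'l::finite \<Rightarrow> real^'l \<Rightarrow> real" where
  "max_ratio c y = Max (range (\<lambda>l. y$l / c$l))"

lemma gobj_eq_max_ratio: "gobj alpha c y = alpha * max_ratio c y"
  by (simp add: gobj_def max_ratio_def)

lemma max_ratio_ge: "y$l / c$l \<le> max_ratio c y"
  unfolding max_ratio_def by (rule Max_ge) auto

lemma max_ratio_le: "(\<And>l. y$l / c$l \<le> t) \<Longrightarrow> max_ratio c y \<le> t"
  unfolding max_ratio_def by (subst Max_le_iff) auto

lemma max_ratio_lipschitz:
  fixes c u v :: "real^'l::finite"
  assumes "\<forall>l. 0 < c$l"
  shows "\<bar>max_ratio c u - max_ratio c v\<bar> \<le> (\<Sum>l\<in>UNIV. 1 / c$l) * norm (u - v)"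
proof -
  let ?K = "\<Sum>l\<in>UNIV. 1 / c$l"
  have "max_ratio c a \<le> max_ratio c b + ?K * norm (a - b)" for a b :: "real^'l"
  proof (rule max_ratio_le)
    fix l
    have cl: "c$l > 0" using assms by auto
    have "a$l - b$l \<le> norm (a - b)"
      using component_le_norm_cart[of "a - b" l] by simp
    hence "(a$l - b$l) / c$l \<le> norm (a - b) * (1 / c$l)"
      using cl by (simp add: divide_right_mono)
    also have "\<dots> \<le> norm (a - b) * ?K"
      by (rule mult_left_mono, rule member_le_sum) (use assms in \<open>auto simp: less_imp_le\<close>)
    finally show "a$l / c$l \<le> max_ratio c b + ?K * norm (a - b)"
      using max_ratio_ge[of b l c] cl by (simp add: diff_divide_distrib mult.commute)
  qed
  from this[of u v] this[of v u] show ?thesis by (simp add: norm_minus_commute abs_le_iff)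
qed

lemma max_ratio_nonneg:
  assumes "y \<in> Yset c"
  shows "0 \<le> max_ratio c y"
proof -
  have "0 \<le> y$l" "0 \<le> c$l" for l using assms by (auto simp: Yset_def intro: order_trans)
  hence "0 \<le> y$l / c$l" for l by simp
  thus ?thesis using max_ratio_ge order_trans by blast
qed

lemma max_ratio_le_one:
  assumes "y \<in> Yset c"
  shows "max_ratio c y \<le> 1"
proof (rule max_ratio_le)
  fix l
  have "0 \<le> y$l" "y$l \<le> c$l" using assms by (auto simp: Yset_def)
  thus "y$l / c$l \<le> 1" by (cases "c$l = 0") (simp_all add: divide_le_eq_1)
qed

lemma convex_on_max_ratio: "convex_on UNIV (max_ratio (c::real^'l::finite))"
proof (rule convex_onI)
  fix t :: real and a b :: "real^'l"
  assume "0 < t" "t < 1"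
  show "max_ratio c ((1 - t) *\<^sub>R a + t *\<^sub>R b) \<le> (1 - t) * max_ratio c a + t * max_ratio c b"
  proof (rule max_ratio_le)
    fix l
    have "((1 - t) *\<^sub>R a + t *\<^sub>R b)$l / c$l = (1 - t) * (a$l / c$l) + t * (b$l / c$l)"
      by (simp add: add_divide_distrib)
    also have "\<dots> \<le> (1 - t) * max_ratio c a + t * max_ratio c b"
      using \<open>t < 1\<close> \<open>0 < t\<close> by (intro add_mono mult_left_mono max_ratio_ge) auto
    finally show "((1 - t) *\<^sub>R a + t *\<^sub>R b)$l / c$l \<le> (1 - t) * max_ratio c a + t * max_ratio c b" .
  qed
qed simp

lemma convex_on_gobj:
  assumes "alpha \<ge> 0"
  shows "convex_on UNIV (gobj alpha c)"
  unfolding gobj_eq_max_ratio[abs_def]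
  by (rule convex_on_cmul[OF assms convex_on_max_ratio])

lemma tendsto_gobj:
  fixes ys :: "nat \<Rightarrow> real^'l::finite"
  assumes "\<forall>l. 0 < c$l" and "ys \<longlonglongrightarrow> yl"
  shows "(\<lambda>n. gobj alpha c (ys n)) \<longlonglongrightarrow> gobj alpha c yl"
proof -
  define K where "K = \<bar>alpha\<bar> * (\<Sum>l\<in>UNIV. 1 / c$l)"
  have "norm (gobj alpha c (ys n) - gobj alpha c yl) \<le> norm (ys n - yl) * K" for n
  proof -
    have "norm (gobj alpha c (ys n) - gobj alpha c yl) = \<bar>alpha\<bar> * \<bar>max_ratio c (ys n) - max_ratio c yl\<bar>"
      by (simp add: gobj_eq_max_ratio abs_mult[symmetric] right_diff_distrib)
    also have "\<dots> \<le> \<bar>alpha\<bar> * ((\<Sum>l\<in>UNIV. 1 / c$l) * norm (ys n - yl))"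
      by (intro mult_left_mono max_ratio_lipschitz assms(1)) simp
    finally show ?thesis by (simp add: K_def mult_ac)
  qed
  hence "(\<lambda>n. gobj alpha c (ys n) - gobj alpha c yl) \<longlonglongrightarrow> 0"
    by (intro tendsto_0_le[OF LIM_zero[OF assms(2)], of _ K] always_eventually) simp
  thus ?thesis by (rule LIM_zero_cancel)
qed

lemma Yset_eq_cbox: "Yset c = cbox 0 c"
  by (auto simp: Yset_def mem_box_cart)

section \<open>First-order conditions of the y-subproblem\<close>

text \<open>The vector a = alpha (lam_l / c_l)_l is a subgradient of g at yb when lam is a probability
  vector supported on the coordinates attaining the maximal ratio; the last clause says that
  -zh - a lies in the normal cone of the box at yb.\<close>

definition kkt_weights :: "real \<Rightarrow> real^'l::finite \<Rightarrow> real^'l \<Rightarrow> real^'l \<Rightarrow> ('l \<Rightarrow> real) \<Rightarrow> bool" where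
  "kkt_weights alpha c zh yb lam \<longleftrightarrow> (\<forall>l. 0 \<le> lam l) \<and> sum lam UNIV = 1 \<and>
     (\<forall>l. 0 < lam l \<longrightarrow> yb$l / c$l = max_ratio c yb) \<and>
     (\<forall>l u. 0 \<le> u \<and> u \<le> c$l \<longrightarrow> (- zh$l - alpha * lam l / c$l) * (u - yb$l) \<le> 0)"

lemma gobj_subgradient_of_weights:
  assumes "alpha \<ge> 0" "\<forall>l. 0 \<le> lam l" "sum lam UNIV = 1"
    and active: "\<forall>l. 0 < lam l \<longrightarrow> yb$l / c$l = max_ratio c yb"
  shows "gobj alpha c yb + inner (\<chi> l. alpha * lam l / c$l) (u - yb) \<le> gobj alpha c u"
proof -
  have "inner (\<chi> l. alpha * lam l / c$l) (u - yb) = alpha * (\<Sum>l\<in>UNIV. lam l * (u$l / c$l - yb$l / c$l))"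
    unfolding inner_vec_def sum_distrib_left
    by (intro sum.cong refl) (simp add: diff_divide_distrib[symmetric] mult.assoc)
  also have "\<dots> \<le> alpha * (\<Sum>l\<in>UNIV. lam l * (max_ratio c u - max_ratio c yb))"
  proof (rule mult_left_mono, rule sum_mono)
    fix l
    show "lam l * (u$l / c$l - yb$l / c$l) \<le> lam l * (max_ratio c u - max_ratio c yb)"
    proof (cases "lam l = 0")
      case False
      hence "0 < lam l" using assms(2) by (simp add: order.not_eq_order_implies_strict)
      thus ?thesis using active max_ratio_ge[of u l c] by (intro mult_left_mono) auto
    qed simp
  qed (use assms(1) in simp)
  also have "\<dots> = alpha * (max_ratio c u - max_ratio c yb)"
    using assms(3) by (simp add: sum_distrib_right[symmetric])
  finally show ?thesis by (simp add: gobj_eq_max_ratio algebra_simps)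
qed

lemma frechet_pair_of_kkt_weights:
  fixes c yb zh :: "real^'l::finite"
  assumes alpha: "alpha > 0" and yb: "yb \<in> Yset c" and lam: "kkt_weights alpha c zh yb lam"
  shows "\<exists>a b. a \<in> frechet_subdiff (\<lambda>v. ereal (gobj alpha c v)) yb \<and>
              b \<in> frechet_subdiff (indic (Yset c)) yb \<and> a + b + zh = 0"
proof -
  define a :: "real^'l" where "a = (\<chi> l. alpha * lam l / c$l)"
  have "a \<in> frechet_subdiff (\<lambda>v. ereal (gobj alpha c v)) yb"
    unfolding a_def using alpha lam
    by (intro subgradient_imp_frechet_subdiff gobj_subgradient_of_weights) (auto simp: kkt_weights_def)
  moreover have "- zh - a \<in> frechet_subdiff (indic (Yset c)) yb"
  proof (rule frechet_subdiff_indicI[OF yb zero_less_one])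
    fix u assume "u \<in> Yset c"
    have "inner (- zh - a) (u - yb) = (\<Sum>l\<in>UNIV. (- zh$l - alpha * lam l / c$l) * (u$l - yb$l))"
      unfolding a_def inner_vec_def by (simp add: algebra_simps)
    also have "\<dots> \<le> 0"
      by (rule sum_nonpos) (use lam \<open>u \<in> Yset c\<close> in \<open>auto simp: Yset_def kkt_weights_def\<close>)
    finally show "inner (- zh - a) (u - yb) \<le> 0" .
  qed
  moreover have "a + (- zh - a) + zh = 0" by simp
  ultimately show ?thesis by blast
qed

locale box_max_ratio_min =
  fixes alpha :: real and c zh yb :: "real^'l::finite"
  assumes cpos: "\<forall>l. 0 < c$l" and alpha: "alpha > 0" and yb: "yb \<in> Yset c"
    and opt: "\<And>v. v \<in> Yset c \<Longrightarrow> gobj alpha c yb + inner zh yb \<le> gobj alpha c v + inner zh v"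
begin

lemma c_pos: "0 < c$l"
  using cpos by blast

lemma yb_bounds: "0 \<le> yb$l" "yb$l \<le> c$l"
  using yb by (auto simp: Yset_def)

lemma yb_le_max_ratio: "yb$l \<le> max_ratio c yb * c$l"
  using max_ratio_ge[of yb l c] c_pos[of l] by (simp add: pos_divide_le_eq)

lemma inner_nonneg_if_max_ratio_le:
  assumes "v \<in> Yset c" "max_ratio c v \<le> max_ratio c yb"
  shows "0 \<le> inner zh (v - yb)"
proof -
  have "alpha * max_ratio c yb + inner zh yb \<le> alpha * max_ratio c v + inner zh v"
    using opt[OF assms(1)] by (simp add: gobj_eq_max_ratio)
  also have "\<dots> \<le> alpha * max_ratio c yb + inner zh v" using assms(2) alpha by simp
  finally show ?thesis by (simp add: inner_diff_right)
qed

lemma coordinate_move_nonneg: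
  assumes "0 \<le> t" "t \<le> c$l" "t / c$l \<le> max_ratio c yb"
  shows "0 \<le> zh$l * (t - yb$l)"
proof -
  define v where "v = (\<chi> i. if i = l then t else yb$i)"
  have "v \<in> Yset c" using assms yb_bounds by (auto simp: Yset_def v_def)
  moreover have "max_ratio c v \<le> max_ratio c yb"
    by (rule max_ratio_le) (use assms max_ratio_ge in \<open>auto simp: v_def\<close>)
  moreover have "inner zh (v - yb) = zh$l * (t - yb$l)"
  proof -
    have "inner zh (v - yb) = (\<Sum>i\<in>UNIV. if i = l then zh$l * (t - yb$l) else 0)"
      unfolding inner_vec_def by (intro sum.cong refl) (auto simp: v_def)
    thus ?thesis by simp
  qed
  ultimately show ?thesis using inner_nonneg_if_max_ratio_le[of v] by simp
qed

lemma zh_nonneg_if_inactive: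
  assumes "yb$l < max_ratio c yb * c$l"
  shows "0 \<le> zh$l"
proof -
  have "0 \<le> zh$l * (max_ratio c yb * c$l - yb$l)"
    using coordinate_move_nonneg[of "max_ratio c yb * c$l" l] c_pos[of l] max_ratio_nonneg[OF yb]
      max_ratio_le_one[OF yb] by (simp add: mult_left_le_one_le)
  thus ?thesis using assms by (simp add: zero_le_mult_iff)
qed

lemma zh_nonpos_if_pos:
  assumes "0 < yb$l"
  shows "zh$l \<le> 0"
proof -
  have "0 \<le> zh$l * (0 - yb$l)"
    using coordinate_move_nonneg[of 0 l] c_pos[of l] max_ratio_nonneg[OF yb] by simp
  thus ?thesis using assms by (simp add: mult_le_0_iff)
qed

lemma value_nonpos: "alpha * max_ratio c yb + inner zh yb \<le> 0"
proof -
  have "(0::real^'l) \<in> Yset c" using c_pos by (auto simp: Yset_def less_imp_le)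
  moreover have "max_ratio c 0 \<le> 0" by (rule max_ratio_le) simp
  hence "alpha * max_ratio c 0 \<le> 0" using alpha by (simp add: mult_nonneg_nonpos)
  ultimately show ?thesis using opt[of 0] by (simp add: gobj_eq_max_ratio)
qed

lemma yb_zero_if_max_ratio_zero: "max_ratio c yb = 0 \<Longrightarrow> yb$l = 0"
  using yb_le_max_ratio[of l] yb_bounds(1)[of l] by simp

lemma negative_part_budget:
  assumes m: "max_ratio c yb = 0"
  shows "(\<Sum>l\<in>UNIV. max 0 (- zh$l * c$l)) \<le> alpha"
proof -
  have yb0: "yb$l = 0" for l using yb_zero_if_max_ratio_zero[OF m] .
  define v where "v = (\<chi> l. if zh$l < 0 then c$l else (0::real))"
  have "v \<in> Yset c" using c_pos by (auto simp: Yset_def v_def less_imp_le)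
  moreover have "max_ratio c v \<le> 1" by (rule max_ratio_le) (simp add: v_def less_imp_le[OF c_pos] c_pos)
  hence "alpha * max_ratio c v \<le> alpha" using alpha by simp
  moreover have "inner zh v = - (\<Sum>l\<in>UNIV. max 0 (- zh$l * c$l))"
  proof -
    have "zh$l * v$l = - max 0 (- zh$l * c$l)" for l
      using c_pos[of l] by (auto simp: v_def max_def mult_le_0_iff)
    thus ?thesis unfolding inner_vec_def sum_negf[symmetric] by simp
  qed
  moreover have "inner zh yb = 0" using yb0 by (simp add: inner_vec_def)
  ultimately show ?thesis using opt[of v] m by (simp add: gobj_eq_max_ratio)
qed

lemma kkt_weights_if_max_ratio_zero:
  assumes m: "max_ratio c yb = 0"
  shows "\<exists>lam. kkt_weights alpha c zh yb lam"
proof -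
  have yb0: "yb$l = 0" for l using yb_zero_if_max_ratio_zero[OF m] .
  define p where "p l = max 0 (- zh$l * c$l) / alpha" for l
  define P where "P = sum p UNIV"
  have P1: "P \<le> 1"
    unfolding P_def p_def sum_divide_distrib[symmetric] using negative_part_budget[OF m] alpha by simp
  have p0: "0 \<le> p l" for l unfolding p_def using alpha by simp
  define lam where "lam l = p l + (1 - P) / real CARD('l)" for l
  have "kkt_weights alpha c zh yb lam"
    unfolding kkt_weights_def
  proof (intro conjI allI impI)
    show "0 \<le> lam l" for l unfolding lam_def using p0 P1 by simp
    show "sum lam UNIV = 1" unfolding lam_def sum.distrib P_def[symmetric] by simp
    show "yb$l / c$l = max_ratio c yb" for l using yb0 m by simp
    fix l u assume u: "0 \<le> u \<and> u \<le> c$l"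
    have "alpha * p l / c$l \<le> alpha * lam l / c$l"
      unfolding lam_def using alpha c_pos[of l] P1
      by (intro divide_right_mono mult_left_mono) auto
    moreover have "alpha * p l / c$l = max 0 (- zh$l * c$l) / c$l" using alpha by (simp add: p_def)
    moreover have "- zh$l \<le> max 0 (- zh$l * c$l) / c$l" using c_pos[of l] by (simp add: le_divide_eq)
    ultimately have "- zh$l - alpha * lam l / c$l \<le> 0" by linarith
    thus "(- zh$l - alpha * lam l / c$l) * (u - yb$l) \<le> 0" using u yb0[of l]
      by (simp add: mult_nonpos_nonneg)
  qed
  thus ?thesis by blast
qed

definition active_set :: "'l set" where
  "active_set = {l. yb$l = max_ratio c yb * c$l}"

definition active_mass :: real where
  "active_mass = (\<Sum>l\<in>active_set. zh$l * c$l)"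

lemma zh_nonpos_on_active: "0 < max_ratio c yb \<Longrightarrow> l \<in> active_set \<Longrightarrow> zh$l \<le> 0"
  using zh_nonpos_if_pos[of l] c_pos[of l] by (simp add: active_set_def)

lemma zh_off_active:
  assumes "l \<notin> active_set"
  shows "0 \<le> zh$l" "zh$l = 0 \<or> yb$l = 0"
proof -
  show "0 \<le> zh$l"
    using zh_nonneg_if_inactive[of l] yb_le_max_ratio[of l] assms by (simp add: active_set_def less_le)
  thus "zh$l = 0 \<or> yb$l = 0" using zh_nonpos_if_pos[of l] yb_bounds(1)[of l] by force
qed

lemma inner_eq_active_mass: "inner zh yb = max_ratio c yb * active_mass"
proof -
  have "inner zh yb = (\<Sum>l\<in>UNIV. if l \<in> active_set then max_ratio c yb * (zh$l * c$l) else 0)"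
    unfolding inner_vec_def by (intro sum.cong refl) (use zh_off_active(2) in \<open>auto simp: active_set_def\<close>)
  also have "\<dots> = max_ratio c yb * active_mass"
    by (simp add: sum.If_cases active_mass_def sum_distrib_left)
  finally show ?thesis .
qed

lemma active_mass_le:
  assumes "0 < max_ratio c yb"
  shows "alpha + active_mass \<le> 0"
proof -
  have "max_ratio c yb * (alpha + active_mass) \<le> 0"
    using value_nonpos inner_eq_active_mass by (simp add: algebra_simps)
  thus ?thesis using assms by (simp add: mult_le_0_iff)
qed

text \<open>Comparing with yb / m, which is admissible when m < 1, reverses the inequality of
  active_mass_le.\<close>

lemma active_mass_eq:
  assumes mpos: "0 < max_ratio c yb" and "max_ratio c yb < 1"
  shows "alpha + active_mass = 0"
proof -
  define m where "m = max_ratio c yb"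
  define v where "v = (1 / m) *\<^sub>R yb"
  have vY: "v \<in> Yset c" unfolding v_def Yset_def
    using yb_bounds yb_le_max_ratio mpos by (auto simp: m_def divide_le_eq mult.commute)
  have "max_ratio c v \<le> 1"
  proof (rule max_ratio_le)
    fix l
    show "v$l / c$l \<le> 1"
      using yb_le_max_ratio[of l] mpos c_pos[of l] by (simp add: v_def m_def field_simps)
  qed
  hence "alpha * max_ratio c v \<le> alpha" using alpha by simp
  moreover have "inner zh v = active_mass" unfolding v_def using inner_eq_active_mass mpos by (simp add: m_def)
  ultimately have "alpha * m + m * active_mass \<le> alpha + active_mass"
    using opt[OF vY] inner_eq_active_mass by (simp add: gobj_eq_max_ratio m_def)
  hence "0 \<le> (1 - m) * (alpha + active_mass)" by (simp add: algebra_simps)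
  hence "0 \<le> alpha + active_mass" using assms(2) by (simp add: m_def zero_le_mult_iff)
  thus ?thesis using active_mass_le[OF mpos] by simp
qed

lemma kkt_weights_if_max_ratio_pos:
  assumes mpos: "0 < max_ratio c yb"
  shows "\<exists>lam. kkt_weights alpha c zh yb lam"
proof -
  have neg: "active_mass < 0" using active_mass_le[OF mpos] alpha by simp
  define lam where "lam l = (if l \<in> active_set then zh$l * c$l / active_mass else 0)" for l
  have "kkt_weights alpha c zh yb lam"
    unfolding kkt_weights_def
  proof (intro conjI allI impI)
    show "0 \<le> lam l" for l unfolding lam_def using zh_nonpos_on_active[OF mpos] neg c_pos
      by (auto intro!: divide_nonpos_neg simp: mult_nonpos_nonneg less_imp_le)
    show "sum lam UNIV = 1" unfolding lam_def using neg
      by (simp add: sum.If_cases active_mass_def[symmetric] sum_divide_distrib[symmetric])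
    show "yb$l / c$l = max_ratio c yb" if "0 < lam l" for l
      using that c_pos[of l] by (auto simp: lam_def active_set_def split: if_splits)
    fix l u assume u: "0 \<le> u \<and> u \<le> c$l"
    show "(- zh$l - alpha * lam l / c$l) * (u - yb$l) \<le> 0"
    proof (cases "l \<in> active_set")
      case False
      then show ?thesis using zh_off_active[OF False] u by (auto simp: lam_def)
    next
      case True
      have kap: "- zh$l - alpha * lam l / c$l = (- zh$l) * ((active_mass + alpha) / active_mass)"
        using True c_pos[of l] neg by (simp add: lam_def field_simps)
      show ?thesis
      proof (cases "max_ratio c yb < 1")
        case True
        thus ?thesis using kap active_mass_eq[OF mpos] by (simp add: add.commute)
      next
        case False
        hence "yb$l = c$l" using \<open>l \<in> active_set\<close> max_ratio_le_one[OF yb] by (simp add: active_set_def)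
        hence "u - yb$l \<le> 0" using u by simp
        moreover have "0 \<le> (- zh$l) * ((active_mass + alpha) / active_mass)"
          using zh_nonpos_on_active[OF mpos True] active_mass_le[OF mpos] neg
          by (intro mult_nonneg_nonneg divide_nonpos_neg) auto
        ultimately show ?thesis unfolding kap by (rule mult_nonneg_nonpos[rotated])
      qed
    qed
  qed
  thus ?thesis by blast
qed

lemma frechet_kkt:
  "\<exists>a b. a \<in> frechet_subdiff (\<lambda>v. ereal (gobj alpha c v)) yb \<and>
         b \<in> frechet_subdiff (indic (Yset c)) yb \<and> a + b + zh = 0"
proof -
  have "\<exists>lam. kkt_weights alpha c zh yb lam"
    using kkt_weights_if_max_ratio_zero kkt_weights_if_max_ratio_pos
      max_ratio_nonneg[OF yb] by force
  thus ?thesis using frechet_pair_of_kkt_weights[OF alpha yb] by blast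
qed

end

section \<open>The smooth part of f and the x-subproblem\<close>

definition fsmooth :: "('p::finite \<Rightarrow> 'k::finite) \<Rightarrow> real \<Rightarrow> ('k \<Rightarrow> real) \<Rightarrow> real^'p \<Rightarrow> real" where
  "fsmooth blk beta s x = - (\<Sum>k\<in>UNIV. Uk beta (s k) (blocknorm blk x k))"

lemma fobj_eq_fsmooth:
  "(\<forall>i. 0 \<le> x$i) \<Longrightarrow> (\<forall>k. 0 < blocknorm blk x k) \<Longrightarrow> fobj blk beta s x = ereal (fsmooth blk beta s x)"
  by (simp add: fobj_def fsmooth_def)

lemma blocknorm_pos_if_fobj_finite: "fobj blk beta s x \<noteq> \<infinity> \<Longrightarrow> 0 < blocknorm blk x k"
  by (simp add: fobj_def split: if_splits)

lemma blocknorm_eq_sum: "(\<forall>i. 0 \<le> x$i) \<Longrightarrow> blocknorm blk x k = (\<Sum>i\<in>{i. blk i = k}. x$i)"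
  by (simp add: blocknorm_def)

lemma tendsto_blocknorm:
  "xs \<longlonglongrightarrow> x \<Longrightarrow> (\<lambda>n. blocknorm blk (xs n) k) \<longlonglongrightarrow> blocknorm blk x k"
  unfolding blocknorm_def by (intro tendsto_sum tendsto_rabs tendsto_vec_nth)

lemma tendsto_fsmooth:
  assumes "xs \<longlonglongrightarrow> x" "\<forall>k. 0 < blocknorm blk x k"
  shows "(\<lambda>n. fsmooth blk beta s (xs n)) \<longlonglongrightarrow> fsmooth blk beta s x"
  unfolding fsmooth_def Uk_def using assms
  by (intro tendsto_minus tendsto_sum tendsto_diff tendsto_mult tendsto_const tendsto_ln
      tendsto_divide tendsto_blocknorm) (auto simp: less_imp_neq[symmetric])

lemma block_ratio_le_fsmooth:
  fixes blk :: "'p::finite \<Rightarrow> 'k::finite"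
  assumes "beta \<ge> 0" "\<forall>k. 0 \<le> s k" "\<forall>k. 0 < blocknorm blk x k \<and> blocknorm blk x k \<le> B"
  shows "s k / blocknorm blk x k \<le> fsmooth blk beta s x + real CARD('k) * (beta * ln B)"
proof -
  let ?u = "blocknorm blk x"
  have "s k / ?u k \<le> (\<Sum>k'\<in>UNIV. s k' / ?u k')"
    by (rule member_le_sum) (use assms(2,3) in \<open>auto intro: divide_nonneg_pos\<close>)
  also have "\<dots> \<le> (\<Sum>k'\<in>UNIV. s k' / ?u k' - beta * ln (?u k') + beta * ln B)"
  proof (rule sum_mono)
    fix k'
    have "0 < ?u k'" "?u k' \<le> B" using assms(3) by auto
    hence "ln (?u k') \<le> ln B" by simp
    thus "s k' / ?u k' \<le> s k' / ?u k' - beta * ln (?u k') + beta * ln B"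
      using assms(1) by (simp add: mult_left_mono)
  qed
  also have "\<dots> = fsmooth blk beta s x + real CARD('k) * (beta * ln B)"
    by (simp add: fsmooth_def Uk_def sum.distrib sum_subtractf sum_negf)
  finally show ?thesis .
qed

lemma blocknorm_le_card_norm: "blocknorm blk x k \<le> real CARD('p::finite) * norm (x :: real^'p)"
proof -
  have "blocknorm blk x k \<le> (\<Sum>i\<in>UNIV. \<bar>x$i\<bar>)"
    unfolding blocknorm_def by (rule sum_mono2) auto
  also have "\<dots> \<le> (\<Sum>i\<in>(UNIV::'p set). norm x)"
    by (rule sum_mono) (use component_le_norm_cart in auto)
  finally show ?thesis by simp
qed

lemma fsmooth_line_has_derivative:
  fixes x h :: "real^'p::finite" and blk :: "'p \<Rightarrow> 'k::finite"
  assumes "\<forall>k. 0 < blocknorm blk x k"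
  defines "H k \<equiv> \<Sum>i\<in>{i. blk i = k}. h$i"
  shows "((\<lambda>t. - (\<Sum>k\<in>UNIV. Uk beta (s k) (blocknorm blk x k + t * H k)))
           has_real_derivative inner (fgrad blk beta s x) h) (at 0)"
proof -
  define B where "B k = blocknorm blk x k" for k
  define gk where "gk k = - (beta / B k + s k / (B k)\<^sup>2)" for k
  have "inner (fgrad blk beta s x) h = (\<Sum>i\<in>UNIV. gk (blk i) * h$i)"
    by (simp add: inner_vec_def fgrad_def gk_def B_def)
  also have "\<dots> = (\<Sum>k\<in>UNIV. \<Sum>i\<in>{i. i \<in> UNIV \<and> blk i = k}. gk (blk i) * h$i)"
    by (rule sum.group[symmetric]) auto
  also have "\<dots> = (\<Sum>k\<in>UNIV. gk k * H k)"
    unfolding H_def sum_distrib_left by (intro sum.cong refl) auto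
  also have "\<dots> = (\<Sum>k\<in>UNIV. - (beta * H k / B k + s k * H k / (B k)\<^sup>2))"
    by (intro sum.cong refl) (simp add: gk_def algebra_simps)
  finally have grad: "inner (fgrad blk beta s x) h = \<dots>" .
  have "B k \<noteq> 0" "0 < B k" for k using assms(1) by (auto simp: B_def less_imp_neq[symmetric])
  hence "((\<lambda>t. - (\<Sum>k\<in>UNIV. Uk beta (s k) (B k + t * H k)))
           has_real_derivative (\<Sum>k\<in>UNIV. - (beta * H k / B k + s k * H k / (B k)\<^sup>2))) (at 0)"
    unfolding Uk_def
    by (auto intro!: derivative_eq_intros sum.cong simp: power2_eq_square field_simps sum_negf)
  thus ?thesis unfolding grad B_def .
qed

lemma fsmooth_on_line:
  assumes "\<forall>i. 0 \<le> x$i" "\<forall>i. 0 \<le> (x + t *\<^sub>R h)$i"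
  shows "fsmooth blk beta s (x + t *\<^sub>R h)
    = - (\<Sum>k\<in>UNIV. Uk beta (s k) (blocknorm blk x k + t * (\<Sum>i\<in>{i. blk i = k}. h$i)))"
  using assms by (simp add: fsmooth_def blocknorm_eq_sum sum.distrib sum_distrib_left)

lemma support_nearby:
  fixes x :: "real^'n::finite"
  obtains d where "d > 0" "\<And>u i. norm (u - x) < d \<Longrightarrow> 0 < x$i \<Longrightarrow> 0 < u$i"
proof
  define d where "d = Min (insert 1 ((\<lambda>i. x$i) ` {i. 0 < x$i}))"
  show "0 < d" unfolding d_def by (subst Min_gr_iff) auto
  fix u i assume u: "norm (u - x) < d" and xi: "0 < x$i"
  have "d \<le> x$i" unfolding d_def by (rule Min_le) (use xi in auto)
  moreover have "\<bar>u$i - x$i\<bar> \<le> norm (u - x)" using component_le_norm_cart[of "u - x" i] by simp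
  ultimately show "0 < u$i" using u by linarith
qed

lemma segment_in_Xset:
  assumes x: "x \<in> Xset blk w" and u: "u \<in> Xset blk w" and supp: "\<And>i. 0 < x$i \<Longrightarrow> 0 < u$i"
    and t: "0 \<le> t" "t \<le> 1"
  shows "x + t *\<^sub>R (u - x) \<in> Xset blk w"
proof -
  have comp: "(x + t *\<^sub>R (u - x))$i = (1 - t) * x$i + t * u$i" for i by (simp add: algebra_simps)
  have xu_nonneg: "0 \<le> x$i" "0 \<le> u$i" for i using x u by (auto simp: Xset_def)
  hence nonneg: "0 \<le> (x + t *\<^sub>R (u - x))$i" for i unfolding comp using t by simp
  have "blockl0 blk (x + t *\<^sub>R (u - x)) k \<le> w k" for k
  proof -
    have "(x + t *\<^sub>R (u - x))$i = 0" if "u$i = 0" for i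
    proof -
      have "x$i = 0" using supp[of i] that xu_nonneg(1)[of i] by (cases "0 < x$i") auto
      thus ?thesis using that by (simp add: comp)
    qed
    hence "blockl0 blk (x + t *\<^sub>R (u - x)) k \<le> blockl0 blk u k"
      unfolding blockl0_def by (intro card_mono) auto
    also have "\<dots> \<le> w k" using u by (simp add: Xset_def)
    finally show ?thesis .
  qed
  thus ?thesis using nonneg by (simp add: Xset_def)
qed

lemma segment_blocknorm_pos:
  assumes x: "\<forall>i. 0 \<le> x$i" "\<forall>k. 0 < blocknorm blk x k" and u: "\<forall>i. 0 \<le> u$i"
    and supp: "\<And>i. 0 < x$i \<Longrightarrow> 0 < u$i" and t: "0 \<le> t" "t \<le> 1"
  shows "0 < blocknorm blk (x + t *\<^sub>R (u - x)) k"
proof -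
  have "\<exists>i. blk i = k \<and> 0 < x$i"
  proof (rule ccontr)
    assume "\<nexists>i. blk i = k \<and> 0 < x$i"
    hence "blocknorm blk x k \<le> 0" using x(1) by (force simp: blocknorm_def intro: sum_nonpos)
    thus False using x(2) by (simp add: not_le[symmetric])
  qed
  then obtain i where i: "blk i = k" "0 < x$i" by blast
  have "0 < (1 - t) * x$i + t * u$i"
    using t i(2) supp[OF i(2)] by (cases "t = 1") (auto intro: add_pos_nonneg)
  hence "0 < \<bar>(x + t *\<^sub>R (u - x))$i\<bar>" by (simp add: algebra_simps)
  also have "\<dots> \<le> blocknorm blk (x + t *\<^sub>R (u - x)) k"
    unfolding blocknorm_def by (rule member_le_sum) (use i in auto)
  finally show ?thesis .
qed

text \<open>Supports can only grow near xb, so segments from xb towards nearby points of the sparsity set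
  stay in it; along them the prox objective has a nonnegative one-sided derivative.\<close>

lemma prox_min_imp_frechet_normal:
  fixes xb q :: "real^'p::finite" and blk :: "'p \<Rightarrow> 'k::finite"
  assumes mu: "mu > 0" and xb: "xb \<in> Xset blk w" and xbpos: "\<forall>k. 0 < blocknorm blk xb k"
    and opt: "\<And>u. u \<in> Xset blk w \<Longrightarrow> \<forall>k. 0 < blocknorm blk u k \<Longrightarrow>
       fsmooth blk beta s xb + mu/2 * (norm (xb - (xb + (1/mu) *\<^sub>R q)))\<^sup>2
       \<le> fsmooth blk beta s u + mu/2 * (norm (u - (xb + (1/mu) *\<^sub>R q)))\<^sup>2"
  shows "q - fgrad blk beta s xb \<in> frechet_subdiff (indic (Xset blk w)) xb"
proof -
  obtain d where d: "d > 0" "\<And>u i. norm (u - xb) < d \<Longrightarrow> 0 < xb$i \<Longrightarrow> 0 < u$i"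
    using support_nearby by blast
  have xb_nonneg: "\<forall>i. 0 \<le> xb$i" using xb by (simp add: Xset_def)
  show ?thesis
  proof (rule frechet_subdiff_indicI[OF xb d(1)])
    fix u assume u: "u \<in> Xset blk w" "norm (u - xb) < d"
    define h where "h = u - xb"
    define H where "H k = (\<Sum>i\<in>{i. blk i = k}. h$i)" for k
    define a where "a = - ((1/mu) *\<^sub>R q)"
    define Psi where "Psi t = - (\<Sum>k\<in>UNIV. Uk beta (s k) (blocknorm blk xb k + t * H k))
        + mu/2 * ((norm a)\<^sup>2 + 2 * t * inner a h + t\<^sup>2 * (norm h)\<^sup>2)" for t
    have Psi_min: "Psi 0 \<le> Psi t" if t: "0 < t" "t \<le> 1" for t
    proof -
      let ?xt = "xb + t *\<^sub>R h"
      have supp: "\<And>i. 0 < xb$i \<Longrightarrow> 0 < u$i" using d(2) u(2) by blast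
      have xt: "?xt \<in> Xset blk w" unfolding h_def using segment_in_Xset[OF xb u(1) supp] t by simp
      have "0 < blocknorm blk ?xt k" for k
        unfolding h_def using segment_blocknorm_pos[OF xb_nonneg xbpos _ supp] u(1) t
        by (simp add: Xset_def)
      note opt_t = opt[OF xt] this
      have xt_nonneg: "\<forall>i. 0 \<le> ?xt$i" using xt by (simp add: Xset_def)
      have eq: "?xt - (xb + (1/mu) *\<^sub>R q) = a + t *\<^sub>R h" by (simp add: a_def algebra_simps)
      have "Psi t = fsmooth blk beta s ?xt + mu/2 * (norm (?xt - (xb + (1/mu) *\<^sub>R q)))\<^sup>2"
        unfolding Psi_def H_def fsmooth_on_line[OF xb_nonneg xt_nonneg] eq power2_norm_add
        by (simp add: power_mult_distrib)
      moreover have "Psi 0 = fsmooth blk beta s xb + mu/2 * (norm (xb - (xb + (1/mu) *\<^sub>R q)))\<^sup>2"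
        by (simp add: Psi_def fsmooth_def a_def)
      ultimately show ?thesis using opt_t by simp
    qed
    have "(Psi has_real_derivative inner (fgrad blk beta s xb) h + mu * inner a h) (at 0)"
      unfolding Psi_def H_def
      by (rule fsmooth_line_has_derivative[OF xbpos] derivative_eq_intros refl | simp)+
    hence "0 \<le> inner (fgrad blk beta s xb) h + mu * inner a h"
      by (rule DERIV_nonneg_at_right_min[OF _ zero_less_one]) (use Psi_min in simp)
    thus "inner (q - fgrad blk beta s xb) (u - xb) \<le> 0"
      using mu by (simp add: a_def h_def inner_diff_left)
  qed
qed

section \<open>Descent of the augmented Lagrangian\<close>

lemma power2_norm_add_scaled:
  fixes w z :: "'a::real_inner"
  assumes "rho > 0"
  shows "rho/2 * (norm (w + (1/rho) *\<^sub>R z))\<^sup>2 = rho/2 * (norm w)\<^sup>2 + inner z w + (norm z)\<^sup>2 / (2 * rho)"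
  unfolding power2_norm_add using assms
  by (simp add: inner_commute field_simps power2_eq_square)

lemma linearized_prox_step:
  fixes A :: "real^'l::finite" and M :: "real^'p::finite^'l" and x x' :: "real^'p"
  assumes "mu > 0"
    and "Fx' + mu/2 * (norm (x' - (x + (rho/mu) *\<^sub>R (transpose M *v A))))\<^sup>2
         \<le> Fx + mu/2 * (norm (x - (x + (rho/mu) *\<^sub>R (transpose M *v A))))\<^sup>2"
  shows "Fx' + mu/2 * (norm (x' - x))\<^sup>2 - rho * inner A (M *v (x' - x)) \<le> Fx"
proof -
  define q where "q = transpose M *v A"
  define I where "I = inner A (M *v (x' - x))"
  define Q where "Q = (rho/mu)\<^sup>2 * (norm q)\<^sup>2"
  have "inner (x' - x) q = I"
    unfolding q_def I_def by (subst inner_commute, rule inner_transpose_mult)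
  moreover have "x' - (x + (rho/mu) *\<^sub>R q) = (x' - x) + (- (rho/mu)) *\<^sub>R q" by simp
  ultimately have e1: "(norm (x' - (x + (rho/mu) *\<^sub>R q)))\<^sup>2 = (norm (x' - x))\<^sup>2 - 2 * (rho/mu) * I + Q"
    by (simp only: power2_norm_add inner_scaleR_right norm_scaleR power_mult_distrib Q_def)
      (simp add: power_divide)
  have e2: "(norm (x - (x + (rho/mu) *\<^sub>R q)))\<^sup>2 = Q"
    by (simp add: Q_def power_mult_distrib power_divide)
  have "mu/2 * ((norm (x' - x))\<^sup>2 - 2 * (rho/mu) * I + Q) = mu/2 * (norm (x' - x))\<^sup>2 - rho * I + mu/2 * Q"
    using assms(1) by (simp add: field_simps)
  with assms(2) show ?thesis unfolding q_def[symmetric] I_def[symmetric] e1 e2 by linarith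
qed

text \<open>One sweep of the algorithm decreases the augmented Lagrangian up to the dual increment;
  the x-step pays for the linearization error because mu exceeds rho times the squared norm of M.\<close>

lemma aug_lagrangian_step:
  fixes M :: "real^'p::finite^'l::finite" and x x' :: "real^'p" and y y' z z' :: "real^'l"
  assumes rho: "rho > 0" and mu: "mu > 0" and N: "\<And>h. norm (M *v h) \<le> N * norm h"
    and xi: "Fx' + mu/2 * (norm (x' - (x + (rho/mu) *\<^sub>R (transpose M *v (y - M *v x + (1/rho) *\<^sub>R z)))))\<^sup>2
            \<le> Fx + mu/2 * (norm (x - (x + (rho/mu) *\<^sub>R (transpose M *v (y - M *v x + (1/rho) *\<^sub>R z)))))\<^sup>2"
    and yi: "gy' + rho/2 * (norm (y' - M *v x' + (1/rho) *\<^sub>R z))\<^sup>2 \<le> gy + rho/2 * (norm (y - M *v x' + (1/rho) *\<^sub>R z))\<^sup>2"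
    and zs: "z' = z + rho *\<^sub>R (y' - M *v x')"
  shows "Fx' + gy' + inner z' (y' - M *v x') + rho/2 * (norm (y' - M *v x'))\<^sup>2
     \<le> Fx + gy + inner z (y - M *v x) + rho/2 * (norm (y - M *v x))\<^sup>2
        - (mu - rho * N\<^sup>2)/2 * (norm (x' - x))\<^sup>2 + (norm (z' - z))\<^sup>2 / rho"
proof -
  define w where "w = y - M *v x"
  define w' where "w' = y' - M *v x'"
  define h where "h = x' - x"
  define I where "I = inner (w + (1/rho) *\<^sub>R z) (M *v h)"
  have X: "Fx' + mu/2 * (norm h)\<^sup>2 - rho * I \<le> Fx"
    using linearized_prox_step[OF mu xi] by (simp add: I_def w_def h_def)
  have "(norm (M *v h))\<^sup>2 \<le> N\<^sup>2 * (norm h)\<^sup>2"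
    using N[of h] by (metis norm_ge_zero power_mono power_mult_distrib)
  hence "rho/2 * (norm (M *v h))\<^sup>2 \<le> rho/2 * (N\<^sup>2 * (norm h)\<^sup>2)" using rho by simp
  moreover have "y - M *v x' + (1/rho) *\<^sub>R z = (w + (1/rho) *\<^sub>R z) - M *v h"
    by (simp add: w_def h_def algebra_simps)
  hence "rho/2 * (norm (y - M *v x' + (1/rho) *\<^sub>R z))\<^sup>2
      = rho/2 * (norm (w + (1/rho) *\<^sub>R z))\<^sup>2 - rho * I + rho/2 * (norm (M *v h))\<^sup>2"
    by (simp only: power2_norm_diff I_def) (simp add: algebra_simps)
  ultimately have Y: "gy' + rho/2 * (norm (w' + (1/rho) *\<^sub>R z))\<^sup>2
      \<le> gy + rho/2 * (norm (w + (1/rho) *\<^sub>R z))\<^sup>2 - rho * I + rho/2 * (N\<^sup>2 * (norm h)\<^sup>2)"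
    using yi unfolding w'_def[symmetric] by linarith
  have "inner z' w' = inner z w' + rho * (norm w')\<^sup>2"
    by (simp add: zs w'_def inner_add_left power2_norm_eq_inner)
  moreover have "z' - z = rho *\<^sub>R w'" by (simp add: zs w'_def)
  hence "(norm (z' - z))\<^sup>2 / rho = rho * (norm w')\<^sup>2"
    using rho by (simp add: power_mult_distrib power2_eq_square)
  ultimately show ?thesis
    using X Y power2_norm_add_scaled[OF rho, of w z] power2_norm_add_scaled[OF rho, of w' z]
    unfolding w_def[symmetric] w'_def[symmetric] h_def[symmetric]
    by (simp add: field_simps)
qed

lemma descent_bounded_above:
  fixes Q a b :: "nat \<Rightarrow> real"
  assumes "\<And>j. Q (Suc j) + a j \<le> Q j + b j" "\<And>j. 0 \<le> a j" "\<And>j. 0 \<le> b j" "summable b"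
  shows "Q n + (\<Sum>j<n. a j) \<le> Q 0 + suminf b"
proof -
  have "Q n + (\<Sum>j<n. a j) \<le> Q 0 + (\<Sum>j<n. b j)"
  proof (induction n)
    case (Suc n)
    thus ?case using assms(1)[of n] by simp
  qed simp
  also have "(\<Sum>j<n. b j) \<le> suminf b" by (rule sum_le_suminf) (use assms(3,4) in auto)
  finally show ?thesis by simp
qed

locale prox_admm =
  fixes R :: "real^'p::finite^'l::finite" and blk :: "'p \<Rightarrow> 'k::finite"
    and c :: "real^'l" and w :: "'k \<Rightarrow> nat"
    and alpha beta rho mu :: real and s :: "'k \<Rightarrow> real"
    and x :: "nat \<Rightarrow> real^'p" and y z :: "nat \<Rightarrow> real^'l"
  assumes R01: "\<forall>l i. R$l$i = 0 \<or> R$l$i = 1"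
    and Rcol: "\<forall>i. \<exists>l. R$l$i \<noteq> 0"
    and cpos: "\<forall>l. 0 < c$l"
    and alpha: "alpha > 0" and beta: "beta > 0" and spos: "\<forall>k. s k > 0"
    and rho: "rho > 0" and mu: "mu > rho * (onorm (\<lambda>v. R *v v))^2"
    and x0: "x 0 \<in> Xset blk w" and x0pos: "\<forall>k. blocknorm blk (x 0) k > 0"
    and y0: "y 0 \<in> Yset c"
    and xstep: "\<forall>j. is_argmin_on
        (\<lambda>u. fobj blk beta s u + ereal (mu / 2 * (norm (u -
           (x j + (rho / mu) *\<^sub>R (transpose R *v (y j - R *v x j + (1 / rho) *\<^sub>R z j)))))^2))
        (Xset blk w) (x (Suc j))"
    and ystep: "\<forall>j. is_argmin_on
        (\<lambda>v. gobj alpha c v + rho / 2 * (norm (v - R *v x (Suc j) + (1 / rho) *\<^sub>R z j))^2)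
        (Yset c) (y (Suc j))"
    and zstep: "\<forall>j. z (Suc j) = z j + rho *\<^sub>R (y (Suc j) - R *v x (Suc j))"
begin

definition nu :: "nat \<Rightarrow> real^'p" where
  "nu j = x j + (rho / mu) *\<^sub>R (transpose R *v (y j - R *v x j + (1 / rho) *\<^sub>R z j))"

definition residual :: "nat \<Rightarrow> real^'l" where
  "residual j = y j - R *v x j"

definition aug_lagrangian :: "nat \<Rightarrow> real" where
  "aug_lagrangian j = fsmooth blk beta s (x j) + gobj alpha c (y j) + inner (z j) (residual j)
     + rho/2 * (norm (residual j))\<^sup>2"

lemma mu_pos: "mu > 0"
  using mu rho by (smt (verit) mult_nonneg_nonneg zero_le_power2)

lemma x_in_Xset: "x j \<in> Xset blk w"
  using x0 xstep by (cases j) (auto simp: is_argmin_on_def)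

lemma y_in_Yset: "y j \<in> Yset c"
  using y0 ystep by (cases j) (auto simp: is_argmin_on_def)

lemma x_nonneg: "\<forall>i. 0 \<le> x j $ i"
  using x_in_Xset[of j] by (simp add: Xset_def)

lemma x_step_fobj:
  "u \<in> Xset blk w \<Longrightarrow> fobj blk beta s (x (Suc j)) + ereal (mu/2 * (norm (x (Suc j) - nu j))\<^sup>2)
      \<le> fobj blk beta s u + ereal (mu/2 * (norm (u - nu j))\<^sup>2)"
  using xstep unfolding is_argmin_on_def nu_def by blast

text \<open>The x-step keeps every block active because the previous iterate is a competitor of
  finite value.\<close>

lemma x_blocknorm_pos: "\<forall>k. 0 < blocknorm blk (x j) k"
proof (induction j)
  case 0
  show ?case using x0pos by simp
next
  case (Suc j)
  have "fobj blk beta s (x j) = ereal (fsmooth blk beta s (x j))"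
    by (rule fobj_eq_fsmooth[OF x_nonneg Suc.IH])
  hence "fobj blk beta s (x (Suc j)) + ereal (mu/2 * (norm (x (Suc j) - nu j))\<^sup>2)
      \<le> ereal (fsmooth blk beta s (x j)) + ereal (mu/2 * (norm (x j - nu j))\<^sup>2)"
    using x_step_fobj[OF x_in_Xset[of j], of j] by simp
  hence "fobj blk beta s (x (Suc j)) \<noteq> \<infinity>" by auto
  thus ?case using blocknorm_pos_if_fobj_finite by blast
qed

lemma x_step_min:
  assumes "u \<in> Xset blk w" "\<forall>k. 0 < blocknorm blk u k"
  shows "fsmooth blk beta s (x (Suc j)) + mu/2 * (norm (x (Suc j) - nu j))\<^sup>2
      \<le> fsmooth blk beta s u + mu/2 * (norm (u - nu j))\<^sup>2"
proof -
  have "\<forall>i. 0 \<le> u$i" using assms(1) by (simp add: Xset_def)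
  thus ?thesis using x_step_fobj[OF assms(1), of j] fobj_eq_fsmooth[OF _ assms(2)]
      fobj_eq_fsmooth[OF x_nonneg x_blocknorm_pos] by simp
qed

lemma y_step_min:
  "v \<in> Yset c \<Longrightarrow> gobj alpha c (y (Suc j)) + rho/2 * (norm (y (Suc j) - R *v x (Suc j) + (1/rho) *\<^sub>R z j))\<^sup>2
      \<le> gobj alpha c v + rho/2 * (norm (v - R *v x (Suc j) + (1/rho) *\<^sub>R z j))\<^sup>2"
  using ystep unfolding is_argmin_on_def by blast

lemma residual_Suc: "residual (Suc j) = (1/rho) *\<^sub>R (z (Suc j) - z j)"
  using zstep rho by (simp add: residual_def)

lemma aug_lagrangian_descent:
  "aug_lagrangian (Suc j) + (mu - rho * (onorm (\<lambda>v. R *v v))\<^sup>2)/2 * (norm (x (Suc j) - x j))\<^sup>2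
     \<le> aug_lagrangian j + (norm (z (Suc j) - z j))\<^sup>2 / rho"
proof -
  have "norm (R *v h) \<le> onorm (\<lambda>v. R *v v) * norm h" for h
    by (rule onorm) simp
  from aug_lagrangian_step[OF rho mu_pos this
      x_step_min[OF x_in_Xset[of j] x_blocknorm_pos[of j], of j, unfolded nu_def]
      y_step_min[OF y_in_Yset[of j], of j] zstep[rule_format, of j]]
  show ?thesis unfolding aug_lagrangian_def residual_def nu_def by simp
qed

lemma bounded_range_y: "bounded (range y)"
  using y_in_Yset by (intro bounded_subset[OF bounded_cbox]) (auto simp: Yset_eq_cbox)

end

section \<open>Boundedness of the iterates\<close>

lemma component_le_norm_01_matrix:
  fixes M :: "real^'p::finite^'l::finite" and x :: "real^'p"
  assumes "\<forall>l i. M$l$i = 0 \<or> M$l$i = 1" "\<exists>l. M$l$i \<noteq> 0" "\<forall>i. 0 \<le> x$i"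
  shows "x$i \<le> norm (M *v x)"
proof -
  obtain l where l: "M$l$i = 1" using assms(1,2) by blast
  have "0 \<le> M$l$i'" for i' using assms(1) by (metis order_refl zero_le_one)
  hence "M$l$i * x$i \<le> (\<Sum>i'\<in>UNIV. M$l$i' * x$i')"
    by (intro member_le_sum) (simp_all add: assms(3))
  hence "x$i \<le> (\<Sum>i'\<in>UNIV. M$l$i' * x$i')" by (simp add: l)
  also have "\<dots> = (M *v x)$l" by (simp add: matrix_vector_mult_def)
  also have "\<dots> \<le> norm (M *v x)" using component_le_norm_cart[of "M *v x" l] by simp
  finally show ?thesis .
qed

locale prox_admm_bounded_dual = prox_admm R blk c w alpha beta rho mu s x y z
  for R :: "real^'p::finite^'l::finite" and blk :: "'p \<Rightarrow> 'k::finite"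
    and c w alpha beta rho mu s x y z +
  assumes zsum: "summable (\<lambda>j. (norm (z (Suc (Suc j)) - z (Suc j)))^2)"
    and zbdd: "bounded (range z)"
begin

lemma summable_dual_increments: "summable (\<lambda>j. (norm (z (Suc j) - z j))\<^sup>2)"
  using zsum summable_Suc_iff[where f="\<lambda>j. (norm (z (Suc j) - z j))\<^sup>2"] by simp

lemma residual_to_zero: "residual \<longlonglongrightarrow> 0"
proof -
  have "(\<lambda>j. z (Suc j) - z j) \<longlonglongrightarrow> 0"
    by (rule tendsto_zero_if_power2_norm, rule summable_LIMSEQ_zero[OF summable_dual_increments])
  hence "(\<lambda>j. (1/rho) *\<^sub>R (z (Suc j) - z j)) \<longlonglongrightarrow> (1/rho) *\<^sub>R 0"
    by (intro tendsto_scaleR tendsto_const)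
  hence "(\<lambda>j. residual (Suc j)) \<longlonglongrightarrow> 0" by (simp add: residual_Suc)
  thus ?thesis by (rule LIMSEQ_imp_Suc)
qed

lemma bounded_range_residual: "bounded (range residual)"
proof -
  obtain Z where Z: "\<And>j. norm (z j) \<le> Z" using zbdd unfolding bounded_iff by blast
  have "norm (residual j) \<le> max (norm (residual 0)) (2 * Z / rho)" for j
  proof (cases j)
    case (Suc j')
    have "norm (residual j) = norm (z (Suc j') - z j') / rho" using rho by (simp add: Suc residual_Suc)
    also have "\<dots> \<le> (Z + Z) / rho"
      using rho norm_triangle_ineq4[of "z (Suc j')" "z j'"] Z[of "Suc j'"] Z[of j']
      by (intro divide_right_mono) auto
    finally show ?thesis by simp
  qed simp
  thus ?thesis unfolding bounded_iff by blast
qed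

lemma bounded_range_x: "bounded (range x)"
proof -
  obtain Cy where Cy: "\<And>j. norm (y j) \<le> Cy" using bounded_range_y unfolding bounded_iff by blast
  obtain W where W: "\<And>j. norm (residual j) \<le> W" using bounded_range_residual unfolding bounded_iff by blast
  have "x j $ i \<le> Cy + W" for j i
  proof -
    have "x j $ i \<le> norm (R *v x j)" using component_le_norm_01_matrix R01 Rcol x_nonneg by blast
    also have "R *v x j = y j - residual j" by (simp add: residual_def)
    also have "norm (y j - residual j) \<le> Cy + W"
      using norm_triangle_ineq4[of "y j" "residual j"] Cy[of j] W[of j] by simp
    finally show ?thesis .
  qed
  have "norm (x j) \<le> real CARD('p) * (Cy + W)" for j
  proof -
    have "norm (x j) \<le> (\<Sum>i\<in>UNIV. \<bar>x j $ i\<bar>)" by (rule norm_le_l1_cart)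
    also have "\<dots> \<le> (\<Sum>i\<in>(UNIV::'p set). Cy + W)"
      by (rule sum_mono) (use x_nonneg \<open>\<And>j i. x j $ i \<le> Cy + W\<close> in simp)
    finally show ?thesis by simp
  qed
  thus ?thesis unfolding bounded_iff by blast
qed

lemma fsmooth_le_aug_lagrangian: obtains C where "\<And>j. fsmooth blk beta s (x j) \<le> aug_lagrangian j + C"
proof -
  obtain Z where Z: "\<And>j. norm (z j) \<le> Z" using zbdd unfolding bounded_iff by blast
  obtain W where W: "\<And>j. norm (residual j) \<le> W" using bounded_range_residual unfolding bounded_iff by blast
  have "fsmooth blk beta s (x j) \<le> aug_lagrangian j + Z * W" for j
  proof -
    have "0 \<le> gobj alpha c (y j)"
      using alpha max_ratio_nonneg[OF y_in_Yset] by (simp add: gobj_eq_max_ratio)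
    moreover have "- (Z * W) \<le> inner (z j) (residual j)"
    proof -
      have "\<bar>inner (z j) (residual j)\<bar> \<le> norm (z j) * norm (residual j)" by (rule Cauchy_Schwarz_ineq2)
      also have "\<dots> \<le> Z * W" using Z W by (intro mult_mono) (auto intro: order_trans[OF norm_ge_zero])
      finally show ?thesis by linarith
    qed
    moreover have "0 \<le> rho/2 * (norm (residual j))\<^sup>2" using rho by simp
    ultimately show ?thesis unfolding aug_lagrangian_def by linarith
  qed
  thus ?thesis using that by blast
qed

lemma block_ratio_le_fsmooth_x:
  obtains B where "\<And>j k. s k / blocknorm blk (x j) k \<le> fsmooth blk beta s (x j) + B"
proof -
  obtain Bx where "\<And>j. norm (x j) \<le> Bx" using bounded_range_x unfolding bounded_iff by blast
  hence B: "blocknorm blk (x j) k \<le> real CARD('p) * Bx" for j k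
    using blocknorm_le_card_norm order_trans mult_left_mono of_nat_0_le_iff by metis
  have "s k / blocknorm blk (x j) k \<le> fsmooth blk beta s (x j) + real CARD('k) * (beta * ln (real CARD('p) * Bx))"
    for j k using block_ratio_le_fsmooth[of beta s blk "x j" "real CARD('p) * Bx" k] beta spos
      x_blocknorm_pos[of j] B[of j] by (simp add: less_imp_le)
  thus ?thesis using that by blast
qed

lemma aug_lagrangian_bounded_below: obtains m where "\<And>j. m \<le> aug_lagrangian j"
proof -
  obtain C where C: "\<And>j. fsmooth blk beta s (x j) \<le> aug_lagrangian j + C"
    using fsmooth_le_aug_lagrangian by blast
  obtain B where B: "\<And>j k. s k / blocknorm blk (x j) k \<le> fsmooth blk beta s (x j) + B"
    using block_ratio_le_fsmooth_x by blast
  obtain k :: 'k where True by simp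
  have "0 < s k / blocknorm blk (x j) k" for j using spos x_blocknorm_pos by simp
  hence "- (B + C) \<le> aug_lagrangian j" for j using B[of k j] C[of j] by (smt (verit))
  thus ?thesis using that by blast
qed

lemma aug_lagrangian_bounded_above_and_summable:
  obtains M where "\<And>j. aug_lagrangian j \<le> M" and "summable (\<lambda>j. (norm (x (Suc j) - x j))\<^sup>2)"
proof -
  define cc where "cc = (mu - rho * (onorm (\<lambda>v. R *v v))\<^sup>2) / 2"
  have cc: "cc > 0" using mu by (simp add: cc_def)
  define M where "M = aug_lagrangian 0 + (\<Sum>j. (norm (z (Suc j) - z j))\<^sup>2 / rho)"
  obtain m where m: "\<And>j. m \<le> aug_lagrangian j" using aug_lagrangian_bounded_below by blast
  have bound: "aug_lagrangian n + (\<Sum>j<n. cc * (norm (x (Suc j) - x j))\<^sup>2) \<le> M" for n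
    unfolding M_def using aug_lagrangian_descent rho cc
    by (intro descent_bounded_above summable_divide summable_dual_increments) (auto simp: cc_def)
  have "summable (\<lambda>j. cc * (norm (x (Suc j) - x j))\<^sup>2)"
  proof (rule summableI_nonneg_bounded[where x="M - m"])
    show "(\<Sum>j<n. cc * (norm (x (Suc j) - x j))\<^sup>2) \<le> M - m" for n
      using bound[of n] m[of n] by linarith
  qed (use cc in simp)
  hence "summable (\<lambda>j. (norm (x (Suc j) - x j))\<^sup>2)" using cc by simp
  moreover have "aug_lagrangian j \<le> M" for j
    using bound[of j] cc by (smt (verit) sum_nonneg mult_nonneg_nonneg zero_le_power2)
  ultimately show ?thesis using that by blast
qed

lemma primal_increments_to_zero: "(\<lambda>j. x (Suc j) - x j) \<longlonglongrightarrow> 0"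
  using aug_lagrangian_bounded_above_and_summable
  by (metis summable_LIMSEQ_zero tendsto_zero_if_power2_norm)

text \<open>The barrier term s_k/u of the objective keeps every block norm away from zero, since
  the smooth part stays bounded along the iterates.\<close>

lemma blocknorm_x_bounded_below: "\<exists>\<delta>>0. \<forall>j. \<delta> \<le> blocknorm blk (x j) k"
proof -
  obtain C where C: "\<And>j. fsmooth blk beta s (x j) \<le> aug_lagrangian j + C"
    using fsmooth_le_aug_lagrangian by blast
  obtain B where B: "\<And>j k. s k / blocknorm blk (x j) k \<le> fsmooth blk beta s (x j) + B"
    using block_ratio_le_fsmooth_x by blast
  obtain M where M: "\<And>j. aug_lagrangian j \<le> M" using aug_lagrangian_bounded_above_and_summable by blast
  have ratio: "s k / blocknorm blk (x j) k \<le> M + C + B" for j using B[of k j] C[of j] M[of j] by linarith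
  have pos: "0 < s k / blocknorm blk (x j) k" for j using spos x_blocknorm_pos by simp
  have G: "0 < M + C + B" using ratio[of 0] pos[of 0] by linarith
  have "s k / (M + C + B) \<le> blocknorm blk (x j) k" for j
    using ratio[of j] x_blocknorm_pos[of j] G by (simp add: divide_le_eq mult.commute)
  moreover have "0 < s k / (M + C + B)" using spos G by simp
  ultimately show ?thesis by blast
qed

section \<open>Limit points\<close>

lemma limit_point_subsequence:
  assumes r: "strict_mono r" and xr: "(\<lambda>n. x (r n)) \<longlonglongrightarrow> xb" and yr: "(\<lambda>n. y (r n)) \<longlonglongrightarrow> yb"
  obtains P zh where "strict_mono P" "(\<lambda>n. x (P n)) \<longlonglongrightarrow> xb" "(\<lambda>n. x (Suc (P n))) \<longlonglongrightarrow> xb"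
    "(\<lambda>n. y (Suc (P n))) \<longlonglongrightarrow> yb" "(\<lambda>n. z (P n)) \<longlonglongrightarrow> zh"
proof -
  obtain p where p: "strict_mono p" "\<And>n. Suc (p n) = r (Suc n)"
    using strict_mono_pred_shift[OF r] by blast
  have xp: "(\<lambda>n. x (Suc (p n))) \<longlonglongrightarrow> xb" using LIMSEQ_Suc[OF xr] by (simp add: p(2))
  have yp: "(\<lambda>n. y (Suc (p n))) \<longlonglongrightarrow> yb" using LIMSEQ_Suc[OF yr] by (simp add: p(2))
  have "bounded (range (\<lambda>n. z (p n)))" by (rule bounded_subset[OF zbdd]) auto
  then obtain q zh where q: "strict_mono q" and zq: "((\<lambda>n. z (p n)) \<circ> q) \<longlonglongrightarrow> zh"
    using bounded_imp_convergent_subsequence by blast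
  have P: "strict_mono (p \<circ> q)" by (rule strict_mono_o[OF p(1) q])
  have xP': "(\<lambda>n. x (Suc ((p \<circ> q) n))) \<longlonglongrightarrow> xb"
    using LIMSEQ_subseq_LIMSEQ[OF xp q] by (simp add: o_def)
  moreover have "(\<lambda>n. x ((p \<circ> q) n)) \<longlonglongrightarrow> xb"
  proof -
    have "(\<lambda>n. x (Suc ((p \<circ> q) n)) - x ((p \<circ> q) n)) \<longlonglongrightarrow> 0"
      using LIMSEQ_subseq_LIMSEQ[OF primal_increments_to_zero P] by (simp add: o_def)
    from tendsto_diff[OF xP' this] show ?thesis by simp
  qed
  moreover have "(\<lambda>n. y (Suc ((p \<circ> q) n))) \<longlonglongrightarrow> yb"
    using LIMSEQ_subseq_LIMSEQ[OF yp q] by (simp add: o_def)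
  moreover have "(\<lambda>n. z ((p \<circ> q) n)) \<longlonglongrightarrow> zh" using zq by (simp add: o_def)
  ultimately show ?thesis using that P by blast
qed

context
  fixes P :: "nat \<Rightarrow> nat" and xb :: "real^'p" and yb zh :: "real^'l"
  assumes P: "strict_mono P" and xP: "(\<lambda>n. x (P n)) \<longlonglongrightarrow> xb"
    and xP': "(\<lambda>n. x (Suc (P n))) \<longlonglongrightarrow> xb" and yP': "(\<lambda>n. y (Suc (P n))) \<longlonglongrightarrow> yb"
    and zP: "(\<lambda>n. z (P n)) \<longlonglongrightarrow> zh"
begin

lemma residual_subseq_to_zero: "(\<lambda>n. residual (P n)) \<longlonglongrightarrow> 0"
  using LIMSEQ_subseq_LIMSEQ[OF residual_to_zero P] by (simp add: o_def)

lemma limit_feasible: "yb = R *v xb"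
proof -
  have "(\<lambda>n. residual (Suc (P n))) \<longlonglongrightarrow> yb - R *v xb"
    unfolding residual_def by (intro tendsto_diff yP' tendsto_matrix_mult xP')
  moreover have "strict_mono (\<lambda>n. Suc (P n))" using P by (simp add: strict_mono_def)
  hence "(\<lambda>n. residual (Suc (P n))) \<longlonglongrightarrow> 0"
    using LIMSEQ_subseq_LIMSEQ[OF residual_to_zero] by (simp add: o_def)
  ultimately have "yb - R *v xb = 0" by (rule LIMSEQ_unique)
  thus ?thesis by simp
qed

lemma limit_nu: "(\<lambda>n. nu (P n)) \<longlonglongrightarrow> xb + (1/mu) *\<^sub>R (transpose R *v zh)"
proof -
  have "(\<lambda>n. x (P n) + (rho/mu) *\<^sub>R (transpose R *v (residual (P n) + (1/rho) *\<^sub>R z (P n))))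
      \<longlonglongrightarrow> xb + (rho/mu) *\<^sub>R (transpose R *v (0 + (1/rho) *\<^sub>R zh))"
    by (intro tendsto_add xP tendsto_scaleR tendsto_const tendsto_matrix_mult residual_subseq_to_zero zP)
  thus ?thesis using rho by (simp add: nu_def residual_def matrix_vector_mult_scaleR)
qed

lemma limit_x_in_Xset: "xb \<in> Xset blk w"
proof -
  have xb_nonneg: "0 \<le> xb $ i" for i
    by (rule LIMSEQ_le_const[OF tendsto_vec_nth[OF xP]]) (use x_nonneg in auto)
  have "\<forall>\<^sub>F n in sequentially. \<forall>i. xb$i \<noteq> 0 \<longrightarrow> x (P n) $ i \<noteq> 0"
  proof (rule eventually_all_finite)
    fix i
    show "\<forall>\<^sub>F n in sequentially. xb$i \<noteq> 0 \<longrightarrow> x (P n) $ i \<noteq> 0"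
    proof (cases "xb$i = 0")
      case False
      show ?thesis
        by (rule eventually_mono[OF tendsto_imp_eventually_ne[OF tendsto_vec_nth[OF xP] False]]) simp
    qed simp
  qed
  then obtain n where n: "\<And>i. xb$i \<noteq> 0 \<Longrightarrow> x (P n) $ i \<noteq> 0"
    unfolding eventually_sequentially by blast
  have "blockl0 blk xb k \<le> w k" for k
  proof -
    have "blockl0 blk xb k \<le> blockl0 blk (x (P n)) k"
      unfolding blockl0_def by (rule card_mono) (use n in auto)
    also have "\<dots> \<le> w k" using x_in_Xset[of "P n"] by (simp add: Xset_def)
    finally show ?thesis .
  qed
  thus ?thesis using xb_nonneg by (simp add: Xset_def)
qed

lemma limit_y_in_Yset: "yb \<in> Yset c"
  using closed_sequentially[OF closed_cbox, of "\<lambda>n. y (Suc (P n))"] y_in_Yset yP'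
  unfolding Yset_eq_cbox by simp

lemma limit_blocknorm_pos: "0 < blocknorm blk xb k"
proof -
  obtain \<delta> where "\<delta> > 0" "\<And>j. \<delta> \<le> blocknorm blk (x j) k"
    using blocknorm_x_bounded_below by blast
  moreover have "\<delta> \<le> blocknorm blk xb k"
    by (rule LIMSEQ_le_const[OF tendsto_blocknorm[OF xP]]) (use calculation in auto)
  ultimately show ?thesis by simp
qed

lemma limit_x_prox_min:
  assumes "u \<in> Xset blk w" "\<forall>k. 0 < blocknorm blk u k"
  shows "fsmooth blk beta s xb + mu/2 * (norm (xb - (xb + (1/mu) *\<^sub>R (transpose R *v zh))))\<^sup>2
       \<le> fsmooth blk beta s u + mu/2 * (norm (u - (xb + (1/mu) *\<^sub>R (transpose R *v zh))))\<^sup>2"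
proof (rule LIMSEQ_le)
  show "(\<lambda>n. fsmooth blk beta s (x (Suc (P n))) + mu/2 * (norm (x (Suc (P n)) - nu (P n)))\<^sup>2)
      \<longlonglongrightarrow> fsmooth blk beta s xb + mu/2 * (norm (xb - (xb + (1/mu) *\<^sub>R (transpose R *v zh))))\<^sup>2"
    using limit_blocknorm_pos
    by (intro tendsto_add tendsto_fsmooth xP' tendsto_mult tendsto_const tendsto_power
        tendsto_norm tendsto_diff limit_nu) auto
  show "(\<lambda>n. fsmooth blk beta s u + mu/2 * (norm (u - nu (P n)))\<^sup>2)
      \<longlonglongrightarrow> fsmooth blk beta s u + mu/2 * (norm (u - (xb + (1/mu) *\<^sub>R (transpose R *v zh))))\<^sup>2"
    by (intro tendsto_add tendsto_mult tendsto_const tendsto_power tendsto_norm tendsto_diff limit_nu)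
qed (use x_step_min[OF assms] in auto)

lemma limit_y_prox_min:
  assumes "v \<in> Yset c"
  shows "gobj alpha c yb + rho/2 * (norm ((1/rho) *\<^sub>R zh))\<^sup>2
       \<le> gobj alpha c v + rho/2 * (norm (v - yb + (1/rho) *\<^sub>R zh))\<^sup>2"
proof -
  have "gobj alpha c yb + rho/2 * (norm (yb - R *v xb + (1/rho) *\<^sub>R zh))\<^sup>2
      \<le> gobj alpha c v + rho/2 * (norm (v - R *v xb + (1/rho) *\<^sub>R zh))\<^sup>2"
  proof (rule LIMSEQ_le)
    show "(\<lambda>n. gobj alpha c (y (Suc (P n)))
            + rho/2 * (norm (y (Suc (P n)) - R *v x (Suc (P n)) + (1/rho) *\<^sub>R z (P n)))\<^sup>2)
        \<longlonglongrightarrow> gobj alpha c yb + rho/2 * (norm (yb - R *v xb + (1/rho) *\<^sub>R zh))\<^sup>2"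
      by (intro tendsto_add tendsto_gobj[OF cpos] yP' tendsto_mult tendsto_const tendsto_power
          tendsto_norm tendsto_diff tendsto_matrix_mult xP' tendsto_scaleR zP)
    show "(\<lambda>n. gobj alpha c v + rho/2 * (norm (v - R *v x (Suc (P n)) + (1/rho) *\<^sub>R z (P n)))\<^sup>2)
        \<longlonglongrightarrow> gobj alpha c v + rho/2 * (norm (v - R *v xb + (1/rho) *\<^sub>R zh))\<^sup>2"
      by (intro tendsto_add tendsto_mult tendsto_const tendsto_power tendsto_norm tendsto_diff
          tendsto_matrix_mult xP' tendsto_scaleR zP)
  qed (use y_step_min[OF assms] in auto)
  thus ?thesis by (simp add: limit_feasible[symmetric])
qed

lemma limit_stationary:
  "(\<exists>v \<in> limiting_subdiff (indic (Xset blk w)) xb. fgrad blk beta s xb + v - transpose R *v zh = 0) \<and>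
   (\<exists>a \<in> limiting_subdiff (\<lambda>v. ereal (gobj alpha c v)) yb.
      \<exists>b \<in> limiting_subdiff (indic (Yset c)) yb. a + b + zh = 0)"
proof
  have "transpose R *v zh - fgrad blk beta s xb \<in> frechet_subdiff (indic (Xset blk w)) xb"
    using prox_min_imp_frechet_normal[OF mu_pos limit_x_in_Xset] limit_blocknorm_pos limit_x_prox_min
    by blast
  thus "\<exists>v \<in> limiting_subdiff (indic (Xset blk w)) xb. fgrad blk beta s xb + v - transpose R *v zh = 0"
    by (intro bexI[OF _ frechet_subdiff_imp_limiting_subdiff]) simp_all
  have convex_g: "convex_on (Yset c) (gobj alpha c)"
    unfolding Yset_eq_cbox using alpha by (intro convex_on_subset[OF convex_on_gobj]) auto
  have "gobj alpha c yb + inner zh yb \<le> gobj alpha c v + inner zh v" if "v \<in> Yset c" for v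
    by (rule prox_min_imp_linear_min[OF rho _ convex_g limit_y_in_Yset limit_y_prox_min that])
      (simp add: Yset_eq_cbox)
  then interpret box_max_ratio_min alpha c zh yb
    using cpos alpha limit_y_in_Yset by unfold_locales auto
  show "\<exists>a \<in> limiting_subdiff (\<lambda>v. ereal (gobj alpha c v)) yb.
      \<exists>b \<in> limiting_subdiff (indic (Yset c)) yb. a + b + zh = 0"
    using frechet_kkt frechet_subdiff_imp_limiting_subdiff by blast
qed

end

lemma limit_point_stationary:
  assumes r: "strict_mono r" and lim: "(\<lambda>n. (x (r n), y (r n))) \<longlonglongrightarrow> (xb, yb)"
  shows "(\<forall>k. blocknorm blk xb k > 0) \<and>
       (\<exists>zh :: real^'l.
          (\<exists>v \<in> limiting_subdiff (indic (Xset blk w)) xb.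
              fgrad blk beta s xb + v - transpose R *v zh = 0) \<and>
          (\<exists>a \<in> limiting_subdiff (\<lambda>v. ereal (gobj alpha c v)) yb.
             \<exists>b \<in> limiting_subdiff (indic (Yset c)) yb. a + b + zh = 0) \<and>
          yb = R *v xb)"
proof -
  have "(\<lambda>n. x (r n)) \<longlonglongrightarrow> xb" "(\<lambda>n. y (r n)) \<longlonglongrightarrow> yb"
    using tendsto_fst[OF lim] tendsto_snd[OF lim] by simp_all
  then obtain P zh where sub: "strict_mono P" "(\<lambda>n. x (P n)) \<longlonglongrightarrow> xb"
      "(\<lambda>n. x (Suc (P n))) \<longlonglongrightarrow> xb" "(\<lambda>n. y (Suc (P n))) \<longlonglongrightarrow> yb" "(\<lambda>n. z (P n)) \<longlonglongrightarrow> zh"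
    using limit_point_subsequence[OF r] by blast
  show ?thesis
    using limit_blocknorm_pos[OF sub] limit_stationary[OF sub] limit_feasible[OF sub] by blast
qed

lemma bounded_range_xy: "bounded (range (\<lambda>j. (x j, y j)))"
  by (rule bounded_subset[OF bounded_Times[OF bounded_range_x bounded_range_y]]) auto

end

theorem theorem1:
  fixes R :: "real^'p::finite^'l::finite"
    and blk :: "'p \<Rightarrow> 'k::finite"
    and c :: "real^'l" and w :: "'k \<Rightarrow> nat"
    and alpha beta rho mu :: real and s :: "'k \<Rightarrow> real"
    and x :: "nat \<Rightarrow> real^'p" and y z :: "nat \<Rightarrow> real^'l"
  assumes R01: "\<forall>l i. R$l$i = 0 \<or> R$l$i = 1"
    and Rcol: "\<forall>i. \<exists>l. R$l$i \<noteq> 0"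
    and cpos: "\<forall>l. 0 < c$l"
    and wpos: "\<forall>k. 1 \<le> w k \<and> w k \<le> card {i. blk i = k}"
    and alpha: "alpha > 0" and beta: "beta > 0" and spos: "\<forall>k. s k > 0"
    and rho: "rho > 0" and mu: "mu > rho * (onorm (\<lambda>v. R *v v))^2"
    and x0: "x 0 \<in> Xset blk w" and x0pos: "\<forall>k. blocknorm blk (x 0) k > 0"
    and y0: "y 0 \<in> Yset c"
    and xstep: "\<forall>j. is_argmin_on
        (\<lambda>u. fobj blk beta s u + ereal (mu / 2 * (norm (u -
           (x j + (rho / mu) *\<^sub>R (transpose R *v (y j - R *v x j + (1 / rho) *\<^sub>R z j)))))^2))
        (Xset blk w) (x (Suc j))"
    and ystep: "\<forall>j. is_argmin_on
        (\<lambda>v. gobj alpha c v + rho / 2 * (norm (v - R *v x (Suc j) + (1 / rho) *\<^sub>R z j))^2)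
        (Yset c) (y (Suc j))"
    and zstep: "\<forall>j. z (Suc j) = z j + rho *\<^sub>R (y (Suc j) - R *v x (Suc j))"
    and zsum: "summable (\<lambda>j. (norm (z (Suc (Suc j)) - z (Suc j)))^2)"
    and zbdd: "bounded (range z)"
  shows "bounded (range (\<lambda>j. (x j, y j))) \<and>
    (\<forall>xb yb. (\<exists>r. strict_mono r \<and> (\<lambda>n. (x (r n), y (r n))) \<longlonglongrightarrow> (xb, yb)) \<longrightarrow>
       (\<forall>k. blocknorm blk xb k > 0) \<and>
       (\<exists>zh :: real^'l.
          (\<exists>v \<in> limiting_subdiff (indic (Xset blk w)) xb.
              fgrad blk beta s xb + v - transpose R *v zh = 0) \<and>
          (\<exists>a \<in> limiting_subdiff (\<lambda>v. ereal (gobj alpha c v)) yb.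
             \<exists>b \<in> limiting_subdiff (indic (Yset c)) yb. a + b + zh = 0) \<and>
          yb = R *v xb))"
proof -
  \<comment> \<open>The bounds on w only make the sparsity set nonempty, which x 0 already witnesses.\<close>
  interpret prox_admm_bounded_dual R blk c w alpha beta rho mu s x y z
    by unfold_locales (fact R01 Rcol cpos alpha beta spos rho mu x0 x0pos y0 xstep ystep zstep zsum zbdd)+
  show ?thesis using bounded_range_xy limit_point_stationary by blast
qed

end
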